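(* The maps $\eta:\widetilde{S}_{AB}\to\mathfrak{S}_A$, $\inf^{\widetilde{S}_{AB}}_{i\in I}\sigma_{i,A}\widetilde{\otimes}\sigma_{i,B}\mapsto\inf^{\mathfrak{S}_A}_{i\in I}\sigma_{i,A}$ and $\lambda:\widetilde{S}_{AB}\to\mathfrak{S}_B$, $\inf^{\widetilde{S}_{AB}}_{i\in I}\sigma_{i,A}\widetilde{\otimes}\sigma_{i,B}\mapsto\inf^{\mathfrak{S}_B}_{i\in I}\sigma_{i,B}$ are (well-defined) Inf semi-lattice homomorphisms.
   Context: $\mathfrak{B}=\{\mathbf{Y},\mathbf{N},\bot\}$ with meet $\wedge$ and product $\bullet$ ($x\bullet\mathbf{Y}=x$, $x\bullet\mathbf{N}=\mathbf{N}$, $\bot\bullet\bot=\bot$). $(\mathfrak{S}_A,\mathfrak{E}_A,\epsilon^{\mathfrak{S}_A})$, $(\mathfrak{S}_B,\mathfrak{E}_B,\epsilon^{\mathfrak{S}_B})$ are States/Effects Chu spaces (down-complete Inf semi-lattices, infima written $\inf$, evaluation maps preserving infima in each variable, a constant-$\mathbf{Y}$ effect $\mathfrak{Y}_{\mathfrak{E}}$ in each). The minimal tensor product $\widetilde{S}_{AB}$ consists of the maps $\inf^{\widetilde{S}_{AB}}_{i\in I}\sigma_{i,A}\widetilde{\otimes}\sigma_{i,B}:(\mathfrak{l}_A,\mathfrak{l}_B)\mapsto\bigwedge_{i\in I}\epsilon^{\mathfrak{S}_A}_{\mathfrak{l}_A}(\sigma_{i,A})\bullet\epsilon^{\mathfrak{S}_B}_{\mathfrak{l}_B}(\sigma_{i,B})$,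 ordered pointwise. *)

theory Defs
  imports Main
begin

datatype B3 = Yb | Nb | Botb

instantiation B3 :: order
begin
definition less_eq_B3 :: "B3 \<Rightarrow> B3 \<Rightarrow> bool" where
  "less_eq_B3 x y \<longleftrightarrow> x = Botb \<or> x = y"
definition less_B3 :: "B3 \<Rightarrow> B3 \<Rightarrow> bool" where
  "less_B3 x y \<longleftrightarrow> x \<le> y \<and> x \<noteq> y"
instance by standard (auto simp: less_eq_B3_def less_B3_def)
end

definition bmeet :: "B3 set \<Rightarrow> B3" where
  "bmeet S = (if S \<subseteq> {Yb} then Yb else if S \<subseteq> {Nb} then Nb else Botb)"

fun bprod :: "B3 \<Rightarrow> B3 \<Rightarrow> B3" where
  "bprod x Yb = x"
| "bprod x Nb = Nb"
| "bprod Yb Botb = Botb"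
| "bprod Nb Botb = Nb"
| "bprod Botb Botb = Botb"

definition is_glb_on :: "'a::order set \<Rightarrow> 'a set \<Rightarrow> 'a \<Rightarrow> bool" where
  "is_glb_on C S x \<longleftrightarrow> x \<in> C \<and> (\<forall>y\<in>S. x \<le> y) \<and> (\<forall>z\<in>C. (\<forall>y\<in>S. z \<le> y) \<longrightarrow> z \<le> x)"

definition ginf_on :: "'a::order set \<Rightarrow> 'a set \<Rightarrow> 'a" where
  "ginf_on C S = (THE x. is_glb_on C S x)"

abbreviation ginf :: "'a::order set \<Rightarrow> 'a" where
  "ginf S \<equiv> ginf_on UNIV S"

text \<open>eps l s is the evaluation of effect l on state s; Yeff is the constant-Y effect.\<close>
definition SE_Chu :: "('e::order \<Rightarrow> 's::order \<Rightarrow> B3) \<Rightarrow> 'e \<Rightarrow> bool" where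
  "SE_Chu eps Yeff \<longleftrightarrow>
     (\<forall>S::'s set. S \<noteq> {} \<longrightarrow> (\<exists>x. is_glb_on UNIV S x)) \<and>
     (\<forall>L::'e set. L \<noteq> {} \<longrightarrow> (\<exists>x. is_glb_on UNIV L x)) \<and>
     (\<forall>l S. S \<noteq> {} \<longrightarrow> eps l (ginf S) = bmeet (eps l ` S)) \<and>
     (\<forall>L s. L \<noteq> {} \<longrightarrow> eps (ginf L) s = bmeet ((\<lambda>l. eps l s) ` L)) \<and>
     (\<forall>s. eps Yeff s = Yb) \<and>
     (\<forall>s s'. (\<forall>l. eps l s = eps l s') \<longrightarrow> s = s')"

text \<open>The element inf_{(a,b) in F} a \<otimes> b, for a nonempty set F of pairs of states.\<close>
definition min_tensor ::
  "('ea \<Rightarrow> 'sa \<Rightarrow> B3) \<Rightarrow> ('eb \<Rightarrow> 'sb \<Rightarrow> B3) \<Rightarrow> ('sa \<times> 'sb) set \<Rightarrow> 'ea \<Rightarrow> 'eb \<Rightarrow> B3" where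
  "min_tensor epsA epsB F = (\<lambda>la lb. bmeet ((\<lambda>(a, b). bprod (epsA la a) (epsB lb b)) ` F))"

definition Stilde ::
  "('ea \<Rightarrow> 'sa \<Rightarrow> B3) \<Rightarrow> ('eb \<Rightarrow> 'sb \<Rightarrow> B3) \<Rightarrow> ('ea \<Rightarrow> 'eb \<Rightarrow> B3) set" where
  "Stilde epsA epsB = {min_tensor epsA epsB F | F. F \<noteq> {}}"

end

theory Submission
  imports Defs
begin

(* The pointwise meet of tensors min_tensor F_i is min_tensor of the union of the F_i, so the
   minimal tensor product is closed under pointwise meets, and these are its infima.
   Evaluating a tensor at the unit effect Y_B of the second factor collapses each product to
   its first factor: (inf_i a_i (x) b_i)(l, Y_B) = eps_l(inf_i a_i).  As effects separate
   states, this slice determines the state inf_i a_i, which makes eta well defined; and since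
   evaluation turns infima of states into meets of truth values, eta sends pointwise meets to
   infima.  The same argument with the roles of A and B exchanged handles lambda. *)

lemma is_glb_onI:
  assumes "x \<in> C" "\<And>s. s \<in> S \<Longrightarrow> x \<le> s"
    "\<And>z. z \<in> C \<Longrightarrow> (\<And>s. s \<in> S \<Longrightarrow> z \<le> s) \<Longrightarrow> z \<le> x"
  shows "is_glb_on C S x"
  using assms unfolding is_glb_on_def by blast

lemma is_glb_onD:
  assumes "is_glb_on C S x"
  shows "x \<in> C" "\<And>s. s \<in> S \<Longrightarrow> x \<le> s"
    "\<And>z. z \<in> C \<Longrightarrow> (\<And>s. s \<in> S \<Longrightarrow> z \<le> s) \<Longrightarrow> z \<le> x"
  using assms unfolding is_glb_on_def by blast+

lemma is_glb_on_unique: "is_glb_on C S x \<Longrightarrow> is_glb_on C S y \<Longrightarrow> x = y"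
  by (metis is_glb_onD order_antisym)

lemma ginf_on_eqI: "is_glb_on C S x \<Longrightarrow> ginf_on C S = x"
  unfolding ginf_on_def by (rule the_equality) (auto intro: is_glb_on_unique)

lemma is_glb_on_UN:
  assumes glb_i: "\<And>i. i \<in> I \<Longrightarrow> is_glb_on UNIV (S i) (x i)"
    and glb: "is_glb_on UNIV (x ` I) y"
  shows "is_glb_on UNIV (\<Union>i\<in>I. S i) y"
proof (rule is_glb_onI)
  show "y \<le> s" if s: "s \<in> (\<Union>i\<in>I. S i)" for s
  proof -
    obtain i where i: "i \<in> I" "s \<in> S i" using s by blast
    have "y \<le> x i" using i(1) by (intro is_glb_onD(2)[OF glb]) simp
    also have "x i \<le> s" using i by (intro is_glb_onD(2)[OF glb_i])
    finally show ?thesis .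
  qed
  show "z \<le> y" if lower: "\<And>s. s \<in> (\<Union>i\<in>I. S i) \<Longrightarrow> z \<le> s" for z
  proof -
    have "z \<le> x i" if "i \<in> I" for i
      using that lower by (intro is_glb_onD(3)[OF glb_i]) auto
    then show ?thesis
      by (intro is_glb_onD(3)[OF glb]) auto
  qed
qed simp

lemma bmeet_singleton [simp]: "bmeet {c} = c"
  by (cases c) (simp_all add: bmeet_def)

lemma bmeet_non_singleton: "S \<noteq> {} \<Longrightarrow> \<forall>c. S \<noteq> {c} \<Longrightarrow> bmeet S = Botb"
  unfolding bmeet_def by (auto simp: subset_singleton_iff)

lemma bmeet_glb:
  assumes "S \<noteq> {}"
  shows "is_glb_on UNIV S (bmeet S)"
proof (cases "\<exists>c. S = {c}")
  case True
  then show ?thesis by (auto simp: is_glb_on_def)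
next
  case False
  then show ?thesis using assms
    by (auto simp: is_glb_on_def bmeet_non_singleton less_eq_B3_def)
qed

lemma bmeet_UN:
  assumes "I \<noteq> {}" "\<And>i. i \<in> I \<Longrightarrow> S i \<noteq> {}"
  shows "bmeet (\<Union>i\<in>I. S i) = bmeet ((\<lambda>i. bmeet (S i)) ` I)"
proof (rule is_glb_on_unique)
  show "is_glb_on UNIV (\<Union>i\<in>I. S i) (bmeet (\<Union>i\<in>I. S i))"
    using assms by (intro bmeet_glb) auto
  show "is_glb_on UNIV (\<Union>i\<in>I. S i) (bmeet ((\<lambda>i. bmeet (S i)) ` I))"
    using assms by (intro is_glb_on_UN[where x="\<lambda>i. bmeet (S i)"] bmeet_glb) auto
qed

lemma bprod_Yb_left [simp]: "bprod Yb x = x"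
  by (cases x) auto

definition pointwise_bmeet :: "('a \<Rightarrow> 'b \<Rightarrow> B3) set \<Rightarrow> 'a \<Rightarrow> 'b \<Rightarrow> B3" where
  "pointwise_bmeet T = (\<lambda>x y. bmeet ((\<lambda>t. t x y) ` T))"

lemma is_glb_on_pointwise_bmeet:
  assumes "T \<noteq> {}" "pointwise_bmeet T \<in> C"
  shows "is_glb_on C T (pointwise_bmeet T)"
proof (rule is_glb_onI)
  have glb: "is_glb_on UNIV ((\<lambda>t. t x y) ` T) (pointwise_bmeet T x y)" for x y
    unfolding pointwise_bmeet_def using assms(1) by (simp add: bmeet_glb)
  show "pointwise_bmeet T \<in> C" by fact
  show "pointwise_bmeet T \<le> t" if "t \<in> T" for t
    using that by (auto simp: le_fun_def intro: is_glb_onD(2)[OF glb])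
  show "z \<le> pointwise_bmeet T" if "\<And>t. t \<in> T \<Longrightarrow> z \<le> t" for z
    using that by (auto simp: le_fun_def intro!: is_glb_onD(3)[OF glb])
qed

lemma min_tensor_UN:
  assumes "I \<noteq> {}" "\<And>i. i \<in> I \<Longrightarrow> F i \<noteq> {}"
  shows "min_tensor epsA epsB (\<Union>i\<in>I. F i) = pointwise_bmeet ((\<lambda>i. min_tensor epsA epsB (F i)) ` I)"
  using assms unfolding min_tensor_def pointwise_bmeet_def
  by (simp add: image_UN image_image bmeet_UN)

lemma pointwise_bmeet_in_Stilde:
  assumes "T \<noteq> {}" "T \<subseteq> Stilde epsA epsB"
  shows "pointwise_bmeet T \<in> Stilde epsA epsB"
proof -
  obtain F where F: "\<And>t. t \<in> T \<Longrightarrow> F t \<noteq> {} \<and> t = min_tensor epsA epsB (F t)"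
    using assms(2) unfolding Stilde_def by (auto simp: subset_iff) metis
  then have "T = (\<lambda>t. min_tensor epsA epsB (F t)) ` T"
    by force
  then have "pointwise_bmeet T = min_tensor epsA epsB (\<Union>t\<in>T. F t)"
    using assms(1) F by (simp add: min_tensor_UN)
  moreover have "(\<Union>t\<in>T. F t) \<noteq> {}"
    using assms(1) F by blast
  ultimately show ?thesis
    unfolding Stilde_def by blast
qed

lemma is_glb_on_Stilde:
  assumes "T \<noteq> {}" "T \<subseteq> Stilde epsA epsB"
  shows "is_glb_on (Stilde epsA epsB) T (pointwise_bmeet T)"
  using assms by (simp add: is_glb_on_pointwise_bmeet pointwise_bmeet_in_Stilde)

lemma SE_Chu_eval_ginf: "SE_Chu eps Y \<Longrightarrow> S \<noteq> {} \<Longrightarrow> eps l (ginf S) = bmeet (eps l ` S)"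
  unfolding SE_Chu_def by blast

lemma SE_Chu_separating: "SE_Chu eps Y \<Longrightarrow> (\<And>l. eps l s = eps l s') \<Longrightarrow> s = s'"
  unfolding SE_Chu_def by blast

lemma SE_Chu_eval_unit: "SE_Chu eps Y \<Longrightarrow> eps Y s = Yb"
  unfolding SE_Chu_def by blast

(* Meaningful only for f of the form (\<lambda>l. eps l s); otherwise an arbitrary state. *)

definition state_of :: "('e \<Rightarrow> 's \<Rightarrow> B3) \<Rightarrow> ('e \<Rightarrow> B3) \<Rightarrow> 's" where
  "state_of eps f = (THE s. \<forall>l. eps l s = f l)"

lemma state_of_eqI:
  assumes "SE_Chu eps Y" "\<And>l. eps l s = f l"
  shows "state_of eps f = s"
  unfolding state_of_def
  using assms by (intro the_equality) (auto intro: SE_Chu_separating[OF assms(1)])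

lemma state_of_bmeet:
  assumes "SE_Chu eps Y" "S \<noteq> {}"
  shows "state_of eps (\<lambda>l. bmeet (eps l ` S)) = ginf S"
  using assms by (intro state_of_eqI) (auto simp: SE_Chu_eval_ginf)

lemma min_tensor_unit_right:
  assumes "SE_Chu epsA YA" "SE_Chu epsB YB" "F \<noteq> {}"
  shows "min_tensor epsA epsB F la YB = epsA la (ginf (fst ` F))"
proof -
  have "(\<lambda>(a, b). bprod (epsA la a) (epsB YB b)) ` F = epsA la ` fst ` F"
    using SE_Chu_eval_unit[OF assms(2)] by (force simp: image_image split_beta)
  then show ?thesis
    unfolding min_tensor_def using assms(1,3) by (simp add: SE_Chu_eval_ginf)
qed

lemma min_tensor_unit_left:
  assumes "SE_Chu epsA YA" "SE_Chu epsB YB" "F \<noteq> {}"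
  shows "min_tensor epsA epsB F YA lb = epsB lb (ginf (snd ` F))"
proof -
  have "(\<lambda>(a, b). bprod (epsA YA a) (epsB lb b)) ` F = epsB lb ` snd ` F"
    using SE_Chu_eval_unit[OF assms(1)] by (force simp: image_image split_beta)
  then show ?thesis
    unfolding min_tensor_def using assms(2,3) by (simp add: SE_Chu_eval_ginf)
qed

lemma slice_state_inf_hom:
  assumes chu: "SE_Chu eps Y"
    and slice_min_tensor: "\<And>F. F \<noteq> {} \<Longrightarrow> r (min_tensor epsA epsB F) = (\<lambda>l. eps l (ginf (p ` F)))"
    and slice_meet: "\<And>T. r (pointwise_bmeet T) = (\<lambda>l. bmeet ((\<lambda>t. r t l) ` T))"
  shows "\<exists>h. (\<forall>F. F \<noteq> {} \<longrightarrow> h (min_tensor epsA epsB F) = ginf (p ` F)) \<and>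
             (\<forall>T. T \<noteq> {} \<and> T \<subseteq> Stilde epsA epsB \<longrightarrow>
                  h (ginf_on (Stilde epsA epsB) T) = ginf (h ` T))"
proof -
  define h where "h t = state_of eps (r t)" for t
  have h_min_tensor: "h (min_tensor epsA epsB F) = ginf (p ` F)" if "F \<noteq> {}" for F
    unfolding h_def by (rule state_of_eqI[OF chu]) (simp add: slice_min_tensor[OF that])
  have eval_h: "eps l (h t) = r t l" if t: "t \<in> Stilde epsA epsB" for t l
  proof -
    obtain F where F: "F \<noteq> {}" "t = min_tensor epsA epsB F"
      using t unfolding Stilde_def by blast
    show ?thesis
      unfolding F(2) h_min_tensor[OF F(1)] slice_min_tensor[OF F(1)] ..
  qed
  have h_ginf_on: "h (ginf_on (Stilde epsA epsB) T) = ginf (h ` T)"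
    if T: "T \<noteq> {}" "T \<subseteq> Stilde epsA epsB" for T
  proof -
    have "r (ginf_on (Stilde epsA epsB) T) = (\<lambda>l. bmeet ((\<lambda>t. r t l) ` T))"
      unfolding ginf_on_eqI[OF is_glb_on_Stilde[OF T]] slice_meet ..
    also have "\<dots> = (\<lambda>l. bmeet (eps l ` h ` T))"
      unfolding image_image using eval_h[OF subsetD[OF T(2)]] by simp
    finally show ?thesis
      unfolding h_def using T(1) by (simp add: state_of_bmeet[OF chu])
  qed
  show ?thesis
    using h_min_tensor h_ginf_on by blast
qed

theorem mainTheorem7:
  fixes epsA :: "'ea::order \<Rightarrow> 'sa::order \<Rightarrow> B3" and YA :: 'ea
    and epsB :: "'eb::order \<Rightarrow> 'sb::order \<Rightarrow> B3" and YB :: 'eb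
  assumes "SE_Chu epsA YA" and "SE_Chu epsB YB"
  shows "(\<forall>T. T \<noteq> {} \<and> T \<subseteq> Stilde epsA epsB \<longrightarrow>
            (\<exists>t. is_glb_on (Stilde epsA epsB) T t))
       \<and> (\<exists>eta :: ('ea \<Rightarrow> 'eb \<Rightarrow> B3) \<Rightarrow> 'sa.
            (\<forall>F. F \<noteq> {} \<longrightarrow> eta (min_tensor epsA epsB F) = ginf (fst ` F)) \<and>
            (\<forall>T. T \<noteq> {} \<and> T \<subseteq> Stilde epsA epsB \<longrightarrow>
                 eta (ginf_on (Stilde epsA epsB) T) = ginf (eta ` T)))
       \<and> (\<exists>lam :: ('ea \<Rightarrow> 'eb \<Rightarrow> B3) \<Rightarrow> 'sb.
            (\<forall>F. F \<noteq> {} \<longrightarrow> lam (min_tensor epsA epsB F) = ginf (snd ` F)) \<and>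
            (\<forall>T. T \<noteq> {} \<and> T \<subseteq> Stilde epsA epsB \<longrightarrow>
                 lam (ginf_on (Stilde epsA epsB) T) = ginf (lam ` T)))"
  apply (intro conjI)
  subgoal
    using is_glb_on_Stilde by blast
  subgoal
    by (rule slice_state_inf_hom[OF assms(1), where r = "\<lambda>t la. t la YB"])
      (simp_all add: min_tensor_unit_right[OF assms] pointwise_bmeet_def)
  subgoal
    by (rule slice_state_inf_hom[OF assms(2), where r = "\<lambda>t lb. t YA lb"])
      (simp_all add: min_tensor_unit_left[OF assms] pointwise_bmeet_def)
  done

end
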